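(* Let $S$ be a finite semigroup such that $\equiv_{\mathsf{RM}}$ is the equality relation. Then the minimal degree of a faithful action of $S$ on a set by partial transformations is realized by a semisimple action, i.e., there is a faithful semisimple partial $S$-set of cardinality equal to the least cardinality of a faithful partial $S$-set.
   Context: Semigroups act on the right. For a regular $\mathscr J$-class $J$ (one containing an idempotent): $s\equiv_{\mathsf{RM},J}t$ iff for all $x\in J$, $xs\in J\iff xt\in J$, and if both lie in $J$ then $xs=xt$; $\equiv_{\mathsf{RM}}=\bigcap_J\equiv_{\mathsf{RM},J}$ over regular $J$. A partial $S$-set is a finite set $\Omega$ with a right action by partial maps; faithful means distinct elements act as distinct partial maps. The strong orbit of $\alpha$ is $\mathscr O_\alpha=\{\beta\mid\alpha S^1=\beta S^1\}$; it is transitive if $\mathscr O_\alpha S\cap\mathscr O_\alpha\ne\emptyset$. $\Omega$ is semisimple if every strong orbit is transitive and $S$-invariant (if $\alpha\in\mathscr O$ and $\alpha s$ is defined then $\alpha s\in\mathscr O$). *)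

theory Defs
  imports Main
begin

text \<open>Semigroups are modelled by the type class semigroup_mult (the whole type is S).
  Principal two-sided ideal S^1 s S^1.\<close>

definition ideal1 :: "'a::semigroup_mult \<Rightarrow> 'a set" where
  "ideal1 s = {s} \<union> {x * s | x. True} \<union> {s * y | y. True} \<union> {x * s * y | x y. True}"

definition J_equiv :: "'a::semigroup_mult \<Rightarrow> 'a \<Rightarrow> bool" where
  "J_equiv s t \<longleftrightarrow> ideal1 s = ideal1 t"

definition J_class :: "'a::semigroup_mult \<Rightarrow> 'a set" where
  "J_class s = {t. J_equiv s t}"

definition regular_J_class :: "'a::semigroup_mult set \<Rightarrow> bool" where
  "regular_J_class J \<longleftrightarrow> (\<exists>s. J = J_class s) \<and> (\<exists>e\<in>J. e * e = e)"

definition RM_equiv_J :: "'a::semigroup_mult set \<Rightarrow> 'a \<Rightarrow> 'a \<Rightarrow> bool" where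
  "RM_equiv_J J s t \<longleftrightarrow>
     (\<forall>x\<in>J. (x * s \<in> J \<longleftrightarrow> x * t \<in> J) \<and> (x * s \<in> J \<and> x * t \<in> J \<longrightarrow> x * s = x * t))"

definition RM_equiv :: "'a::semigroup_mult \<Rightarrow> 'a \<Rightarrow> bool" where
  "RM_equiv s t \<longleftrightarrow> (\<forall>J. regular_J_class J \<longrightarrow> RM_equiv_J J s t)"

text \<open>A partial S-set: finite set Omega with a right action by partial maps,
  act alpha s = Some beta meaning alpha s = beta, None meaning undefined.\<close>

definition partial_S_set :: "'b set \<Rightarrow> ('b \<Rightarrow> 'a::semigroup_mult \<Rightarrow> 'b option) \<Rightarrow> bool" where
  "partial_S_set \<Omega> act \<longleftrightarrow> finite \<Omega> \<and>
     (\<forall>\<alpha>\<in>\<Omega>. \<forall>s \<beta>. act \<alpha> s = Some \<beta> \<longrightarrow> \<beta> \<in> \<Omega>) \<and>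
     (\<forall>\<alpha>\<in>\<Omega>. \<forall>s t. act \<alpha> (s * t) = Option.bind (act \<alpha> s) (\<lambda>\<beta>. act \<beta> t))"

definition faithful :: "'b set \<Rightarrow> ('b \<Rightarrow> 'a::semigroup_mult \<Rightarrow> 'b option) \<Rightarrow> bool" where
  "faithful \<Omega> act \<longleftrightarrow> (\<forall>s t. (\<forall>\<alpha>\<in>\<Omega>. act \<alpha> s = act \<alpha> t) \<longrightarrow> s = t)"

definition orbit1 :: "('b \<Rightarrow> 'a::semigroup_mult \<Rightarrow> 'b option) \<Rightarrow> 'b \<Rightarrow> 'b set" where
  "orbit1 act \<alpha> = {\<alpha>} \<union> {\<beta>. \<exists>s. act \<alpha> s = Some \<beta>}"

definition strong_orbit :: "'b set \<Rightarrow> ('b \<Rightarrow> 'a::semigroup_mult \<Rightarrow> 'b option) \<Rightarrow> 'b \<Rightarrow> 'b set" where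
  "strong_orbit \<Omega> act \<alpha> = {\<beta>\<in>\<Omega>. orbit1 act \<alpha> = orbit1 act \<beta>}"

definition transitive_orbit :: "('b \<Rightarrow> 'a::semigroup_mult \<Rightarrow> 'b option) \<Rightarrow> 'b set \<Rightarrow> bool" where
  "transitive_orbit act Orb \<longleftrightarrow> (\<exists>\<gamma>\<in>Orb. \<exists>s \<delta>. act \<gamma> s = Some \<delta> \<and> \<delta> \<in> Orb)"

definition invariant_orbit :: "('b \<Rightarrow> 'a::semigroup_mult \<Rightarrow> 'b option) \<Rightarrow> 'b set \<Rightarrow> bool" where
  "invariant_orbit act Orb \<longleftrightarrow> (\<forall>\<beta>\<in>Orb. \<forall>s \<delta>. act \<beta> s = Some \<delta> \<longrightarrow> \<delta> \<in> Orb)"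

definition semisimple :: "'b set \<Rightarrow> ('b \<Rightarrow> 'a::semigroup_mult \<Rightarrow> 'b option) \<Rightarrow> bool" where
  "semisimple \<Omega> act \<longleftrightarrow> (\<forall>\<alpha>\<in>\<Omega>.
     transitive_orbit act (strong_orbit \<Omega> act \<alpha>) \<and> invariant_orbit act (strong_orbit \<Omega> act \<alpha>))"

end

theory Submission
  imports Defs
begin

text \<open>
  Start from a faithful partial S-set \<Omega> of minimal cardinality. Discard every point whose strong
  orbit is not transitive, and every transition that leaves the strong orbit of its source. What
  remains is semisimple and no larger than \<Omega>. It is still faithful: if s and t act alike on it,
  take x in a J-class J with xs in J. In a finite semigroup this forces x \<in> xs S^1, so for
  every point \<alpha> with \<alpha>x defined, \<alpha>xs lies in the strong orbit of \<alpha>x, which is therefore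
  transitive. Hence \<alpha>xs = \<alpha>xt is computed inside the remaining part, and faithfulness of \<Omega> gives
  xs = xt. Thus s and t are RM-equivalent, hence equal.
\<close>

section \<open>Stability of finite semigroups\<close>

text \<open>\<open>spow c n\<close> is c to the power n + 1: a semigroup has no identity to serve as c^0.\<close>

primrec spow :: "'a::semigroup_mult \<Rightarrow> nat \<Rightarrow> 'a" where
  "spow c 0 = c"
| "spow c (Suc n) = c * spow c n"

lemma spow_add: "spow c m * spow c n = spow c (m + n + 1)"
  by (induction m) (simp_all add: mult.assoc)

lemma spow_Suc_right: "spow c (Suc n) = spow c n * c"
  using spow_add[of c n 0] by simp

lemma spow_eventually_periodic:
  assumes period: "spow c i = spow c (i + d)" and "i \<le> l"
  shows "spow c (l + k * d) = spow c l"
proof -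
  have shift: "spow c (n + d) = spow c n" if "i \<le> n" for n
    using that
  proof (induction n rule: dec_induct)
    case base
    then show ?case using period by simp
  next
    case (step n)
    then show ?case by (simp add: spow_Suc_right)
  qed
  show ?thesis
  proof (induction k)
    case (Suc k)
    have "spow c (l + Suc k * d) = spow c (l + k * d + d)"
      by (simp add: algebra_simps)
    also have "\<dots> = spow c l"
      using shift[of "l + k * d"] Suc \<open>i \<le> l\<close> by simp
    finally show ?case .
  qed simp
qed

lemma ex_idempotent_spow:
  fixes c :: "'a::{semigroup_mult,finite}"
  shows "\<exists>n. spow c n * spow c n = spow c n"
proof -
  have "\<not> inj (spow c)"
    using finite_imageD[of "spow c" UNIV] by auto
  then obtain i j where ij: "spow c i = spow c j" "i < j"
    unfolding inj_def by (metis linorder_neqE_nat)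
  define d where "d = j - i"
  define n where "n = i * d + (d - 1)"
  have "d \<ge> 1" and period: "spow c i = spow c (i + d)"
    using ij by (simp_all add: d_def)
  moreover have "i \<le> i * d"
    using \<open>d \<ge> 1\<close> by simp
  ultimately have "i \<le> n" and "n + 1 = (i + 1) * d"
    unfolding n_def by (linarith, simp)
  have "spow c n * spow c n = spow c (n + (i + 1) * d)"
    by (metis spow_add add.assoc \<open>n + 1 = (i + 1) * d\<close>)
  also have "\<dots> = spow c n"
    using spow_eventually_periodic[OF period \<open>i \<le> n\<close>] .
  finally show ?thesis by blast
qed

lemma spow_conj_fixed:
  assumes "a * x * c = x"
  shows "spow a n * x * spow c n = x"
proof (induction n)
  case (Suc n)
  have "spow a (Suc n) * x * spow c (Suc n) = a * (spow a n * x * spow c n) * c"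
    unfolding spow.simps(2)[of a] spow_Suc_right[of c] by (simp add: mult.assoc)
  then show ?case using Suc assms by simp
qed (use assms in simp)

lemma stability_two_sided:
  fixes x :: "'a::{semigroup_mult,finite}"
  assumes fixed: "a * x * c = x"
  shows "x * c = x \<or> (\<exists>u. x * c * u = x)"
proof -
  obtain n where idem: "spow c n * spow c n = spow c n"
    using ex_idempotent_spow by blast
  have "x * spow c n = x"
    using spow_conj_fixed[OF fixed, of n] idem by (metis mult.assoc)
  then show ?thesis
    by (cases n) (auto simp: mult.assoc)
qed

lemma stability_ideal1:
  fixes x :: "'a::{semigroup_mult,finite}"
  assumes "ideal1 x = ideal1 (x * s)"
  shows "x * s = x \<or> (\<exists>u. x * s * u = x)"
proof -
  have "x \<in> ideal1 (x * s)"
    using assms unfolding ideal1_def by auto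
  then consider "x * s = x" | a where "a * (x * s) = x" | b where "x * s * b = x"
    | a b where "a * (x * s) * b = x"
    unfolding ideal1_def by (elim UnE singletonE CollectE exE conjE; metis)
  then show ?thesis
  proof cases
    case (2 a)
    then show ?thesis using stability_two_sided[of a x s] by (simp add: mult.assoc)
  next
    case (4 a b)
    then show ?thesis using stability_two_sided[of a x "s * b"] by (metis mult.assoc)
  qed blast+
qed

lemma partial_S_set_mult:
  "partial_S_set \<Omega> act \<Longrightarrow> \<alpha> \<in> \<Omega> \<Longrightarrow> act \<alpha> (s * t) = Option.bind (act \<alpha> s) (\<lambda>\<beta>. act \<beta> t)"
  unfolding partial_S_set_def by (elim conjE) simp

lemma partial_S_set_closed:
  "partial_S_set \<Omega> act \<Longrightarrow> \<alpha> \<in> \<Omega> \<Longrightarrow> act \<alpha> s = Some \<beta> \<Longrightarrow> \<beta> \<in> \<Omega>"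
  unfolding partial_S_set_def by (elim conjE) simp

lemma orbit1_self: "\<alpha> \<in> orbit1 act \<alpha>"
  unfolding orbit1_def by simp

lemma orbit1_step: "act \<alpha> s = Some \<beta> \<Longrightarrow> \<beta> \<in> orbit1 act \<alpha>"
  unfolding orbit1_def by blast

lemma orbit1_subset: "partial_S_set \<Omega> act \<Longrightarrow> \<alpha> \<in> \<Omega> \<Longrightarrow> orbit1 act \<alpha> \<subseteq> \<Omega>"
  unfolding orbit1_def using partial_S_set_closed[of \<Omega> act \<alpha>] by blast

lemma orbit1_trans:
  assumes P: "partial_S_set \<Omega> act" and "\<alpha> \<in> \<Omega>"
    and "\<gamma> \<in> orbit1 act \<alpha>" and "\<delta> \<in> orbit1 act \<gamma>"
  shows "\<delta> \<in> orbit1 act \<alpha>"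
proof -
  have "act \<alpha> (s * t) = Some \<delta>" if "act \<alpha> s = Some \<gamma>" "act \<gamma> t = Some \<delta>" for s t
    using partial_S_set_mult[OF P \<open>\<alpha> \<in> \<Omega>\<close>] that by simp
  then show ?thesis
    using assms(3,4) unfolding orbit1_def by blast
qed

lemma strong_orbit_self: "\<alpha> \<in> \<Omega> \<Longrightarrow> \<alpha> \<in> strong_orbit \<Omega> act \<alpha>"
  unfolding strong_orbit_def by simp

lemma strong_orbit_eq:
  "\<gamma> \<in> strong_orbit \<Omega> act \<beta> \<Longrightarrow> strong_orbit \<Omega> act \<gamma> = strong_orbit \<Omega> act \<beta>"
  unfolding strong_orbit_def by auto

lemma mem_strong_orbit_iff:
  assumes P: "partial_S_set \<Omega> act" and "\<alpha> \<in> \<Omega>"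
  shows "\<beta> \<in> strong_orbit \<Omega> act \<alpha> \<longleftrightarrow> \<beta> \<in> orbit1 act \<alpha> \<and> \<alpha> \<in> orbit1 act \<beta>"
proof
  assume "\<beta> \<in> strong_orbit \<Omega> act \<alpha>"
  then show "\<beta> \<in> orbit1 act \<alpha> \<and> \<alpha> \<in> orbit1 act \<beta>"
    unfolding strong_orbit_def using orbit1_self[of \<alpha> act] orbit1_self[of \<beta> act] by auto
next
  assume "\<beta> \<in> orbit1 act \<alpha> \<and> \<alpha> \<in> orbit1 act \<beta>"
  then have \<beta>\<alpha>: "\<beta> \<in> orbit1 act \<alpha>" and \<alpha>\<beta>: "\<alpha> \<in> orbit1 act \<beta>" by auto
  have "\<beta> \<in> \<Omega>"
    using orbit1_subset[OF P \<open>\<alpha> \<in> \<Omega>\<close>] \<beta>\<alpha> by blast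
  have "orbit1 act \<beta> \<subseteq> orbit1 act \<alpha>"
    using orbit1_trans[OF P \<open>\<alpha> \<in> \<Omega>\<close> \<beta>\<alpha>] by blast
  moreover have "orbit1 act \<alpha> \<subseteq> orbit1 act \<beta>"
    using orbit1_trans[OF P \<open>\<beta> \<in> \<Omega>\<close> \<alpha>\<beta>] by blast
  ultimately show "\<beta> \<in> strong_orbit \<Omega> act \<alpha>"
    unfolding strong_orbit_def using \<open>\<beta> \<in> \<Omega>\<close> by blast
qed

lemma strong_orbit_intermediate:
  assumes P: "partial_S_set \<Omega> act" and "\<beta> \<in> \<Omega>"
    and s: "act \<beta> s = Some \<gamma>" and t: "act \<gamma> t = Some \<delta>"
    and "\<delta> \<in> strong_orbit \<Omega> act \<beta>"
  shows "\<gamma> \<in> strong_orbit \<Omega> act \<beta>"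
proof -
  have "\<gamma> \<in> \<Omega>"
    using partial_S_set_closed[OF P \<open>\<beta> \<in> \<Omega>\<close> s] .
  moreover have "\<beta> \<in> orbit1 act \<delta>"
    using assms(5) mem_strong_orbit_iff[OF P \<open>\<beta> \<in> \<Omega>\<close>] by blast
  ultimately have "\<beta> \<in> orbit1 act \<gamma>"
    using orbit1_trans[OF P _ orbit1_step[of act, OF t]] by blast
  then show ?thesis
    using orbit1_step[of act, OF s] mem_strong_orbit_iff[OF P \<open>\<beta> \<in> \<Omega>\<close>] by blast
qed

section \<open>The transitive part of a partial S-set\<close>

definition transitive_part :: "'b set \<Rightarrow> ('b \<Rightarrow> 'a::semigroup_mult \<Rightarrow> 'b option) \<Rightarrow> 'b set" where
  "transitive_part \<Omega> act = {\<beta>\<in>\<Omega>. transitive_orbit act (strong_orbit \<Omega> act \<beta>)}"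

definition transitive_part_act ::
    "'b set \<Rightarrow> ('b \<Rightarrow> 'a::semigroup_mult \<Rightarrow> 'b option) \<Rightarrow> 'b \<Rightarrow> 'a \<Rightarrow> 'b option" where
  "transitive_part_act \<Omega> act \<beta> s =
     (if transitive_orbit act (strong_orbit \<Omega> act \<beta>) \<and>
         (\<exists>\<gamma>. act \<beta> s = Some \<gamma> \<and> \<gamma> \<in> strong_orbit \<Omega> act \<beta>)
      then act \<beta> s else None)"

lemma transitive_part_act_Some:
  "transitive_part_act \<Omega> act \<beta> s = Some \<gamma> \<longleftrightarrow>
     transitive_orbit act (strong_orbit \<Omega> act \<beta>) \<and> act \<beta> s = Some \<gamma> \<and>
     \<gamma> \<in> strong_orbit \<Omega> act \<beta>"
  unfolding transitive_part_act_def by auto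

lemma partial_S_set_transitive_part:
  assumes P: "partial_S_set \<Omega> act"
  shows "partial_S_set (transitive_part \<Omega> act) (transitive_part_act \<Omega> act)"
  unfolding partial_S_set_def
proof (intro conjI ballI allI impI)
  show "finite (transitive_part \<Omega> act)"
    using P unfolding partial_S_set_def transitive_part_def by auto
next
  fix \<alpha> s \<beta>
  assume "transitive_part_act \<Omega> act \<alpha> s = Some \<beta>"
  then have \<beta>: "\<beta> \<in> strong_orbit \<Omega> act \<alpha>" and tr: "transitive_orbit act (strong_orbit \<Omega> act \<alpha>)"
    by (simp_all add: transitive_part_act_Some)
  moreover have "\<beta> \<in> \<Omega>"
    using \<beta> unfolding strong_orbit_def by blast
  ultimately show "\<beta> \<in> transitive_part \<Omega> act"
    unfolding transitive_part_def by (simp add: strong_orbit_eq[OF \<beta>])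
next
  fix \<beta> s t
  assume "\<beta> \<in> transitive_part \<Omega> act"
  then have "\<beta> \<in> \<Omega>" and tr: "transitive_orbit act (strong_orbit \<Omega> act \<beta>)"
    unfolding transitive_part_def by auto
  let ?O = "strong_orbit \<Omega> act \<beta>" and ?act' = "transitive_part_act \<Omega> act"
  show "?act' \<beta> (s * t) = Option.bind (?act' \<beta> s) (\<lambda>\<gamma>. ?act' \<gamma> t)"
  proof (cases "act \<beta> s")
    case None
    then show ?thesis
      using partial_S_set_mult[OF P \<open>\<beta> \<in> \<Omega>\<close>] by (simp add: transitive_part_act_def)
  next
    case (Some \<gamma>)
    then have st: "act \<beta> (s * t) = act \<gamma> t"
      using partial_S_set_mult[OF P \<open>\<beta> \<in> \<Omega>\<close>] by simp
    show ?thesis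
    proof (cases "\<gamma> \<in> ?O")
      case True
      then show ?thesis
        using Some st tr strong_orbit_eq[OF True] by (auto simp: transitive_part_act_def)
    next
      case False
      then have "\<not> (\<exists>\<delta>. act \<gamma> t = Some \<delta> \<and> \<delta> \<in> ?O)"
        using strong_orbit_intermediate[OF P \<open>\<beta> \<in> \<Omega>\<close> Some] by blast
      then show ?thesis
        using Some st False by (auto simp: transitive_part_act_def)
    qed
  qed
qed

lemma orbit1_transitive_part:
  assumes \<alpha>: "\<alpha> \<in> transitive_part \<Omega> act"
  shows "orbit1 (transitive_part_act \<Omega> act) \<alpha> = strong_orbit \<Omega> act \<alpha>"
proof -
  have self: "\<alpha> \<in> strong_orbit \<Omega> act \<alpha>" and tr: "transitive_orbit act (strong_orbit \<Omega> act \<alpha>)"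
    using \<alpha> strong_orbit_self[of \<alpha> \<Omega> act] unfolding transitive_part_def by auto
  have "\<beta> \<in> strong_orbit \<Omega> act \<alpha>" if \<beta>: "\<beta> \<in> orbit1 (transitive_part_act \<Omega> act) \<alpha>" for \<beta>
  proof -
    consider "\<beta> = \<alpha>" | s where "transitive_part_act \<Omega> act \<alpha> s = Some \<beta>"
      using \<beta> unfolding orbit1_def by blast
    then show ?thesis
      by cases (simp_all add: self transitive_part_act_Some)
  qed
  moreover have "\<beta> \<in> orbit1 (transitive_part_act \<Omega> act) \<alpha>" if \<beta>: "\<beta> \<in> strong_orbit \<Omega> act \<alpha>" for \<beta>
  proof -
    have "\<beta> \<in> orbit1 act \<alpha>"
      using \<beta> unfolding strong_orbit_def using orbit1_self[of \<beta> act] by simp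
    then consider "\<beta> = \<alpha>" | s where "act \<alpha> s = Some \<beta>"
      unfolding orbit1_def by blast
    then show ?thesis
    proof cases
      case (2 s)
      then have "transitive_part_act \<Omega> act \<alpha> s = Some \<beta>"
        using tr \<beta> by (simp add: transitive_part_act_Some)
      then show ?thesis
        by (rule orbit1_step)
    qed (simp add: orbit1_self)
  qed
  ultimately show ?thesis
    by blast
qed

lemma strong_orbit_transitive_part:
  assumes \<alpha>: "\<alpha> \<in> transitive_part \<Omega> act"
  shows "strong_orbit (transitive_part \<Omega> act) (transitive_part_act \<Omega> act) \<alpha> =
         strong_orbit \<Omega> act \<alpha>"
proof (intro set_eqI iffI)
  fix \<beta>
  assume "\<beta> \<in> strong_orbit (transitive_part \<Omega> act) (transitive_part_act \<Omega> act) \<alpha>"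
  then have \<beta>: "\<beta> \<in> transitive_part \<Omega> act"
    and "orbit1 (transitive_part_act \<Omega> act) \<alpha> = orbit1 (transitive_part_act \<Omega> act) \<beta>"
    unfolding strong_orbit_def by auto
  then have "strong_orbit \<Omega> act \<alpha> = strong_orbit \<Omega> act \<beta>"
    using orbit1_transitive_part[OF \<alpha>] orbit1_transitive_part[OF \<beta>] by simp
  with \<beta> show "\<beta> \<in> strong_orbit \<Omega> act \<alpha>"
    using strong_orbit_self unfolding transitive_part_def by fastforce
next
  fix \<beta>
  assume \<beta>: "\<beta> \<in> strong_orbit \<Omega> act \<alpha>"
  then have "strong_orbit \<Omega> act \<beta> = strong_orbit \<Omega> act \<alpha>"
    by (rule strong_orbit_eq)
  moreover from this have \<beta>_part: "\<beta> \<in> transitive_part \<Omega> act"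
    using \<alpha> \<beta> unfolding transitive_part_def strong_orbit_def by auto
  ultimately show "\<beta> \<in> strong_orbit (transitive_part \<Omega> act) (transitive_part_act \<Omega> act) \<alpha>"
    unfolding strong_orbit_def[of "transitive_part \<Omega> act"]
    using orbit1_transitive_part[OF \<alpha>] orbit1_transitive_part[OF \<beta>_part] by simp
qed

lemma semisimple_transitive_part:
  "semisimple (transitive_part \<Omega> act) (transitive_part_act \<Omega> act)"
  unfolding semisimple_def
proof (intro ballI conjI)
  fix \<alpha>
  assume \<alpha>: "\<alpha> \<in> transitive_part \<Omega> act"
  let ?O = "strong_orbit \<Omega> act \<alpha>"
  have tr: "transitive_orbit act ?O"
    using \<alpha> unfolding transitive_part_def by simp
  then obtain \<gamma> s \<delta> where \<gamma>: "\<gamma> \<in> ?O" and s: "act \<gamma> s = Some \<delta>" and \<delta>: "\<delta> \<in> ?O"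
    unfolding transitive_orbit_def by blast
  have "transitive_part_act \<Omega> act \<gamma> s = Some \<delta>"
    using tr s \<delta> strong_orbit_eq[OF \<gamma>] by (simp add: transitive_part_act_Some)
  then show "transitive_orbit (transitive_part_act \<Omega> act)
      (strong_orbit (transitive_part \<Omega> act) (transitive_part_act \<Omega> act) \<alpha>)"
    unfolding strong_orbit_transitive_part[OF \<alpha>] transitive_orbit_def using \<gamma> \<delta> by blast
  show "invariant_orbit (transitive_part_act \<Omega> act)
      (strong_orbit (transitive_part \<Omega> act) (transitive_part_act \<Omega> act) \<alpha>)"
    unfolding strong_orbit_transitive_part[OF \<alpha>] invariant_orbit_def
  proof (intro ballI allI impI)
    fix \<beta> t \<delta>'
    assume "\<beta> \<in> ?O" and "transitive_part_act \<Omega> act \<beta> t = Some \<delta>'"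
    then show "\<delta>' \<in> ?O"
      using strong_orbit_eq[OF \<open>\<beta> \<in> ?O\<close>] by (simp add: transitive_part_act_Some)
  qed
qed

lemma card_transitive_part_le:
  assumes "partial_S_set \<Omega> act"
  shows "card (transitive_part \<Omega> act) \<le> card \<Omega>"
proof (rule card_mono)
  show "finite \<Omega>"
    using assms by (simp add: partial_S_set_def)
  show "transitive_part \<Omega> act \<subseteq> \<Omega>"
    unfolding transitive_part_def by blast
qed

section \<open>Faithfulness of the transitive part\<close>

lemma transitive_part_act_of_return:
  assumes P: "partial_S_set \<Omega> act" and \<beta>: "\<beta> \<in> \<Omega>"
    and s: "act \<beta> s = Some \<gamma>" and return: "\<beta> \<in> orbit1 act \<gamma>"
  shows "\<beta> \<in> transitive_part \<Omega> act \<and> transitive_part_act \<Omega> act \<beta> s = Some \<gamma>"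
proof -
  have \<gamma>: "\<gamma> \<in> strong_orbit \<Omega> act \<beta>"
    using mem_strong_orbit_iff[OF P \<beta>] orbit1_step[of act, OF s] return by simp
  then have "transitive_orbit act (strong_orbit \<Omega> act \<beta>)"
    unfolding transitive_orbit_def using strong_orbit_self[OF \<beta>] s by blast
  then show ?thesis
    using \<beta> s \<gamma> unfolding transitive_part_def by (simp add: transitive_part_act_Some)
qed

lemma act_return_of_stable:
  assumes P: "partial_S_set \<Omega> act" and \<alpha>: "\<alpha> \<in> \<Omega>" and x: "act \<alpha> x = Some \<beta>"
    and stable: "x * s = x \<or> (\<exists>u. x * s * u = x)"
  shows "\<exists>\<gamma>. act \<beta> s = Some \<gamma> \<and> \<beta> \<in> orbit1 act \<gamma>"
  using stable
proof
  assume "x * s = x"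
  then have "act \<beta> s = Some \<beta>"
    using partial_S_set_mult[OF P \<alpha>, of x s] x by simp
  then show ?thesis
    using orbit1_self[of \<beta> act] by blast
next
  assume "\<exists>u. x * s * u = x"
  then obtain u where xsu: "x * s * u = x" ..
  have "act \<alpha> (x * s * u) = Option.bind (act \<beta> s) (\<lambda>\<gamma>. act \<gamma> u)"
    using partial_S_set_mult[OF P \<alpha>, of "x * s" u] partial_S_set_mult[OF P \<alpha>, of x s] x by simp
  then have "Option.bind (act \<beta> s) (\<lambda>\<gamma>. act \<gamma> u) = Some \<beta>"
    using xsu x by simp
  then obtain \<gamma> where "act \<beta> s = Some \<gamma>" and "act \<gamma> u = Some \<beta>"
    by (cases "act \<beta> s") auto
  then show ?thesis
    using orbit1_step[of act \<gamma> u \<beta>] by blast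
qed

lemma mult_eq_of_transitive_part_agree:
  fixes x s t :: "'a::{semigroup_mult,finite}"
  assumes P: "partial_S_set \<Omega> act" and F: "faithful \<Omega> act"
    and agree: "\<forall>\<beta>\<in>transitive_part \<Omega> act.
                  transitive_part_act \<Omega> act \<beta> s = transitive_part_act \<Omega> act \<beta> t"
    and J: "ideal1 x = ideal1 (x * s)"
  shows "x * s = x * t"
proof -
  have "act \<alpha> (x * s) = act \<alpha> (x * t)" if \<alpha>: "\<alpha> \<in> \<Omega>" for \<alpha>
  proof (cases "act \<alpha> x")
    case None
    then show ?thesis
      using partial_S_set_mult[OF P \<alpha>] by simp
  next
    case (Some \<beta>)
    have "\<beta> \<in> \<Omega>"
      using partial_S_set_closed[OF P \<alpha> Some] .
    obtain \<gamma> where s: "act \<beta> s = Some \<gamma>" and return: "\<beta> \<in> orbit1 act \<gamma>"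
      using act_return_of_stable[OF P \<alpha> Some stability_ideal1[OF J]] by blast
    then have "\<beta> \<in> transitive_part \<Omega> act" and "transitive_part_act \<Omega> act \<beta> s = Some \<gamma>"
      using transitive_part_act_of_return[OF P \<open>\<beta> \<in> \<Omega>\<close>] by blast+
    then have "transitive_part_act \<Omega> act \<beta> t = Some \<gamma>"
      using agree by simp
    then have "act \<beta> t = act \<beta> s"
      using s by (simp add: transitive_part_act_Some)
    then show ?thesis
      using partial_S_set_mult[OF P \<alpha>] Some by simp
  qed
  then show ?thesis
    using F unfolding faithful_def by blast
qed

lemma RM_equiv_J_of_transitive_part_agree:
  fixes s t :: "'a::{semigroup_mult,finite}"
  assumes P: "partial_S_set \<Omega> act" and F: "faithful \<Omega> act"
    and agree: "\<forall>\<beta>\<in>transitive_part \<Omega> act.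
                  transitive_part_act \<Omega> act \<beta> s = transitive_part_act \<Omega> act \<beta> t"
  shows "RM_equiv_J (J_class z) s t"
  unfolding RM_equiv_J_def
proof (intro ballI)
  fix x
  assume x: "x \<in> J_class z"
  have same_ideal: "ideal1 x = ideal1 y" if "y \<in> J_class z" for y
    using x that unfolding J_class_def J_equiv_def by simp
  have agree': "\<forall>\<beta>\<in>transitive_part \<Omega> act.
                  transitive_part_act \<Omega> act \<beta> t = transitive_part_act \<Omega> act \<beta> s"
    using agree by metis
  have "x * s = x * t" if "x * s \<in> J_class z"
    using mult_eq_of_transitive_part_agree[OF P F agree same_ideal[OF that]] .
  moreover have "x * t = x * s" if "x * t \<in> J_class z"
    using mult_eq_of_transitive_part_agree[OF P F agree' same_ideal[OF that]] .
  ultimately show "(x * s \<in> J_class z \<longleftrightarrow> x * t \<in> J_class z) \<and>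
      (x * s \<in> J_class z \<and> x * t \<in> J_class z \<longrightarrow> x * s = x * t)"
    by metis
qed

lemma faithful_transitive_part:
  fixes act :: "'b \<Rightarrow> 'a::{semigroup_mult,finite} \<Rightarrow> 'b option"
  assumes RM: "\<forall>s t :: 'a. RM_equiv s t \<longrightarrow> s = t"
    and P: "partial_S_set \<Omega> act" and F: "faithful \<Omega> act"
  shows "faithful (transitive_part \<Omega> act) (transitive_part_act \<Omega> act)"
  unfolding faithful_def
proof (intro allI impI)
  fix s t :: 'a
  assume "\<forall>\<beta>\<in>transitive_part \<Omega> act.
            transitive_part_act \<Omega> act \<beta> s = transitive_part_act \<Omega> act \<beta> t"
  then have "RM_equiv s t"
    unfolding RM_equiv_def regular_J_class_def
    using RM_equiv_J_of_transitive_part_agree[OF P F] by blast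
  then show "s = t"
    using RM by blast
qed

section \<open>Minimal faithful partial S-sets\<close>

definition image_act :: "('b \<Rightarrow> 'c) \<Rightarrow> 'b set \<Rightarrow> ('b \<Rightarrow> 'a \<Rightarrow> 'b option) \<Rightarrow> 'c \<Rightarrow> 'a \<Rightarrow> 'c option"
  where "image_act f \<Omega> act y s = map_option f (act (inv_into \<Omega> f y) s)"

lemma image_act_image:
  "inj_on f \<Omega> \<Longrightarrow> \<alpha> \<in> \<Omega> \<Longrightarrow> image_act f \<Omega> act (f \<alpha>) s = map_option f (act \<alpha> s)"
  unfolding image_act_def by simp

lemma partial_S_set_image:
  assumes P: "partial_S_set \<Omega> act" and inj: "inj_on f \<Omega>"
  shows "partial_S_set (f ` \<Omega>) (image_act f \<Omega> act)"
  unfolding partial_S_set_def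
proof (intro conjI ballI allI impI)
  show "finite (f ` \<Omega>)"
    using P unfolding partial_S_set_def by simp
next
  fix y s z
  assume "y \<in> f ` \<Omega>" and "image_act f \<Omega> act y s = Some z"
  then show "z \<in> f ` \<Omega>"
    using image_act_image[OF inj, of _ act] partial_S_set_closed[OF P] by fastforce
next
  fix y s t
  assume "y \<in> f ` \<Omega>"
  then obtain \<alpha> where "\<alpha> \<in> \<Omega>" "y = f \<alpha>" by blast
  then show "image_act f \<Omega> act y (s * t) =
      Option.bind (image_act f \<Omega> act y s) (\<lambda>\<beta>. image_act f \<Omega> act \<beta> t)"
    using partial_S_set_mult[OF P \<open>\<alpha> \<in> \<Omega>\<close>, of s t] partial_S_set_closed[OF P \<open>\<alpha> \<in> \<Omega>\<close>, of s]
    by (cases "act \<alpha> s") (simp_all add: image_act_image[OF inj, of _ act])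
qed

lemma faithful_image:
  assumes P: "partial_S_set \<Omega> act" and F: "faithful \<Omega> act" and inj: "inj_on f \<Omega>"
  shows "faithful (f ` \<Omega>) (image_act f \<Omega> act)"
  unfolding faithful_def
proof (intro allI impI)
  fix s t
  assume agree: "\<forall>y\<in>f ` \<Omega>. image_act f \<Omega> act y s = image_act f \<Omega> act y t"
  have "act \<alpha> s = act \<alpha> t" if "\<alpha> \<in> \<Omega>" for \<alpha>
  proof (rule option.inj_map_strong)
    show "map_option f (act \<alpha> s) = map_option f (act \<alpha> t)"
      using agree that image_act_image[OF inj, of _ act] by force
  next
    fix \<beta> \<gamma>
    assume "\<beta> \<in> set_option (act \<alpha> s)" "\<gamma> \<in> set_option (act \<alpha> t)" "f \<beta> = f \<gamma>"
    then show "\<beta> = \<gamma>"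
      using partial_S_set_closed[OF P that] inj unfolding inj_on_def by auto
  qed
  then show "s = t"
    using F unfolding faithful_def by blast
qed

lemma ex_faithful_nat_copy:
  fixes act :: "'b \<Rightarrow> 'a::semigroup_mult \<Rightarrow> 'b option"
  assumes P: "partial_S_set \<Omega> act" and F: "faithful \<Omega> act"
  shows "\<exists>(\<Omega>' :: nat set) (act' :: nat \<Rightarrow> 'a \<Rightarrow> nat option).
           partial_S_set \<Omega>' act' \<and> faithful \<Omega>' act' \<and> card \<Omega>' = card \<Omega>"
proof -
  have "finite \<Omega>"
    using P unfolding partial_S_set_def by blast
  then obtain f :: "'b \<Rightarrow> nat" where inj: "inj_on f \<Omega>"
    by (meson finite_imp_inj_to_nat_seg)
  show ?thesis
    using partial_S_set_image[OF P inj] faithful_image[OF P F inj] card_image[OF inj] by blast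
qed

text \<open>The right regular representation, on \<open>'a option\<close> as a model of S^1.\<close>

definition right_regular_act :: "'a option \<Rightarrow> 'a::semigroup_mult \<Rightarrow> 'a option option" where
  "right_regular_act x s = Some (Some (case x of None \<Rightarrow> s | Some y \<Rightarrow> y * s))"

lemma partial_S_set_right_regular:
  "partial_S_set (UNIV :: 'a::{semigroup_mult,finite} option set) right_regular_act"
  unfolding partial_S_set_def right_regular_act_def
  by (auto simp: mult.assoc split: option.split)

lemma faithful_right_regular: "faithful UNIV right_regular_act"
  unfolding faithful_def
proof (intro allI impI)
  fix s t :: 'a
  assume "\<forall>\<alpha>\<in>UNIV. right_regular_act \<alpha> s = right_regular_act \<alpha> t"
  then have "right_regular_act None s = right_regular_act None t" by blast
  then show "s = t" by (simp add: right_regular_act_def)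
qed

lemma ex_minimal_faithful_nat:
  "\<exists>(\<Omega> :: nat set) (act :: nat \<Rightarrow> 'a::{semigroup_mult,finite} \<Rightarrow> nat option).
     partial_S_set \<Omega> act \<and> faithful \<Omega> act \<and>
     (\<forall>(\<Omega>' :: 'b set) (act' :: 'b \<Rightarrow> 'a \<Rightarrow> 'b option).
        partial_S_set \<Omega>' act' \<and> faithful \<Omega>' act' \<longrightarrow> card \<Omega> \<le> card \<Omega>')"
proof -
  define degree :: "nat \<Rightarrow> bool" where
    "degree n \<longleftrightarrow> (\<exists>(\<Omega> :: nat set) (act :: nat \<Rightarrow> 'a \<Rightarrow> nat option).
        partial_S_set \<Omega> act \<and> faithful \<Omega> act \<and> card \<Omega> = n)" for n
  have "degree (card (UNIV :: 'a option set))"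
    unfolding degree_def
    using ex_faithful_nat_copy[OF partial_S_set_right_regular faithful_right_regular] .
  then have "degree (LEAST n. degree n)"
    by (rule LeastI)
  then obtain \<Omega> :: "nat set" and act :: "nat \<Rightarrow> 'a \<Rightarrow> nat option"
    where "partial_S_set \<Omega> act" "faithful \<Omega> act" "card \<Omega> = (LEAST n. degree n)"
    by (subst (asm) degree_def) blast
  moreover have "(LEAST n. degree n) \<le> card \<Omega>'"
    if "partial_S_set \<Omega>' act'" "faithful \<Omega>' act'"
    for \<Omega>' :: "'b set" and act' :: "'b \<Rightarrow> 'a \<Rightarrow> 'b option"
  proof (rule Least_le)
    show "degree (card \<Omega>')"
      unfolding degree_def using ex_faithful_nat_copy[OF that] .
  qed
  ultimately show ?thesis
    by (intro exI[of _ \<Omega>] exI[of _ act] conjI allI impI) auto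
qed

theorem corollary2p3:
  assumes "\<forall>s t :: 'a::{semigroup_mult, finite}. RM_equiv s t \<longrightarrow> s = t"
  shows "\<exists>(\<Omega> :: nat set) (act :: nat \<Rightarrow> 'a \<Rightarrow> nat option).
           partial_S_set \<Omega> act \<and> faithful \<Omega> act \<and> semisimple \<Omega> act \<and>
           (\<forall>(\<Omega>' :: 'b set) (act' :: 'b \<Rightarrow> 'a \<Rightarrow> 'b option).
               partial_S_set \<Omega>' act' \<and> faithful \<Omega>' act' \<longrightarrow> card \<Omega> \<le> card \<Omega>')"
proof -
  obtain \<Omega> :: "nat set" and act :: "nat \<Rightarrow> 'a \<Rightarrow> nat option"
    where P: "partial_S_set \<Omega> act" and F: "faithful \<Omega> act"
      and minimal: "\<forall>(\<Omega>' :: 'b set) (act' :: 'b \<Rightarrow> 'a \<Rightarrow> 'b option).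
                      partial_S_set \<Omega>' act' \<and> faithful \<Omega>' act' \<longrightarrow> card \<Omega> \<le> card \<Omega>'"
    using ex_minimal_faithful_nat by blast
  have "card (transitive_part \<Omega> act) \<le> card \<Omega>"
    using card_transitive_part_le[OF P] .
  with minimal show ?thesis
    using partial_S_set_transitive_part[OF P] faithful_transitive_part[OF assms P F]
      semisimple_transitive_part[of \<Omega> act]
    by (intro exI[of _ "transitive_part \<Omega> act"] exI[of _ "transitive_part_act \<Omega> act"]) auto
qed

end
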